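(* Let $P\in(1,+\infty)$ and let $\mathcal{A}\subset\mathbb{N}^k$ be finite. Then $$\left(\sum_{\mathbf{a}\in\mathcal{A}}\frac{W_{k+1}^P(\mathbf{a})}{a_1\cdots a_k}\right)^{1/P}\left(\frac{1}{(\log2)^k}\sum_{\mathbf{a}\in\mathcal{A}}\frac{L^{(k+1)}(\mathbf{a})}{a_1\cdots a_k}\right)^{1-1/P}\ge\sum_{\mathbf{a}\in\mathcal{A}}\frac{\tau_{k+1}(\mathbf{a})}{a_1\cdots a_k}.$$
   Context: For $\mathbf{a}=(a_1,\dots,a_k)\in\mathbb{N}^k$: $\tau_{k+1}(\mathbf{a})=|\{(d_1,\dots,d_k)\in\mathbb{N}^k: d_1\cdots d_i\mid a_1\cdots a_i\ (1\le i\le k)\}|$; $L^{(k+1)}(\mathbf{a})$ is the $k$-dimensional Lebesgue measure of $\bigcup[\log(d_1/2),\log d_1)\times\cdots\times[\log(d_k/2),\log d_k)$ over all such $(d_1,\dots,d_k)$; and $$W_{k+1}^P(\mathbf{a})=\sum_{\substack{d_1\cdots d_i\mid a_1\cdots a_i\\1\le i\le k}}\left(\sum_{\substack{d_1'\cdots d_i'\mid a_1\cdots a_i\\|\log(d_i'/d_i)|<\log2\\1\le i\le k}}1\right)^{P-1},$$ where all $d_i,d_i'$ are positive integers. *)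

theory Defs
  imports "HOL-Analysis.Analysis" "HOL-Probability.Probability"
begin

text \<open>Vectors in N^k are represented as lists of positive naturals of length k
  (paper index i = list index i-1).\<close>

definition pos_vecs :: "nat \<Rightarrow> nat list set" where
  "pos_vecs k = {a. length a = k \<and> (\<forall>x\<in>set a. 0 < x)}"

definition div_tuples :: "nat list \<Rightarrow> nat list set" where
  "div_tuples a = {d. d \<in> pos_vecs (length a) \<and>
      (\<forall>i<length a. prod_list (take (Suc i) d) dvd prod_list (take (Suc i) a))}"

definition tau :: "nat list \<Rightarrow> nat" where
  "tau a = card (div_tuples a)"

definition box :: "nat list \<Rightarrow> (nat \<Rightarrow> real) set" where
  "box d = PiE {..<length d} (\<lambda>i. {ln (real (d ! i) / 2) ..< ln (real (d ! i))})"

definition Lmeas :: "nat list \<Rightarrow> real" where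
  "Lmeas a = measure (PiM {..<length a} (\<lambda>_. lborel)) (\<Union>d\<in>div_tuples a. box d)"

definition Wfun :: "real \<Rightarrow> nat list \<Rightarrow> real" where
  "Wfun P a = (\<Sum>d\<in>div_tuples a.
      real (card {d'\<in>div_tuples a. \<forall>i<length a.
         \<bar>ln (real (d' ! i) / real (d ! i))\<bar> < ln 2}) powr (P - 1))"

end

theory Submission
  imports Defs
begin

text \<open>
  Fix \<open>a\<close> and let \<open>N(d)\<close> count the divisor tuples \<open>d'\<close> of \<open>a\<close> with
  \<open>|log(d'\<^sub>i/d\<^sub>i)| < log 2\<close> for all \<open>i\<close>, so that \<open>W(a) = \<Sum>\<^sub>d N(d)^(P-1)\<close>. Two boxes
  through a common point have corners related in this way, so at every point
  \<open>\<Sum>\<^sub>d 1[box d] / N(d)\<close> is at most the indicator of the union of the boxes; integrating gives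
  \<open>(log 2)^k \<Sum>\<^sub>d 1/N(d) \<le> L(a)\<close>. Finally, index the right-hand side of the theorem by pairs
  \<open>(a, d)\<close> and split each summand \<open>w = 1/(a\<^sub>1\<cdots>a\<^sub>k)\<close> as
  \<open>(w N(d)^(P-1))^(1/P) (w / N(d))^(1-1/P)\<close>; Hoelder's inequality over all pairs concludes.
\<close>

lemma Holder_inequality_sum:
  fixes x y :: "'a \<Rightarrow> real"
  assumes "finite S" "\<And>i. i \<in> S \<Longrightarrow> 0 \<le> x i" "\<And>i. i \<in> S \<Longrightarrow> 0 \<le> y i" "0 < t" "t < 1"
  shows "(\<Sum>i\<in>S. x i powr t * y i powr (1 - t))
           \<le> (\<Sum>i\<in>S. x i) powr t * (\<Sum>i\<in>S. y i) powr (1 - t)"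
proof -
  define X where "X = (\<Sum>i\<in>S. x i)"
  define Y where "Y = (\<Sum>i\<in>S. y i)"
  have "X \<ge> 0" "Y \<ge> 0" unfolding X_def Y_def using assms by (auto intro: sum_nonneg)
  show ?thesis
  proof (cases "X = 0 \<or> Y = 0")
    case True
    then have "(\<forall>i\<in>S. x i = 0) \<or> (\<forall>i\<in>S. y i = 0)"
      unfolding X_def Y_def using assms sum_nonneg_eq_0_iff by blast
    then show ?thesis using \<open>X \<ge> 0\<close> \<open>Y \<ge> 0\<close> by (auto simp flip: X_def Y_def)
  next
    case False
    with \<open>X \<ge> 0\<close> \<open>Y \<ge> 0\<close> have XY: "X > 0" "Y > 0" by auto
    have Young: "x i powr t * y i powr (1 - t)
                   \<le> X powr t * Y powr (1 - t) * (t * (x i / X) + (1 - t) * (y i / Y))"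
      if "i \<in> S" for i
    proof (cases "x i = 0 \<or> y i = 0")
      case True
      then show ?thesis using assms that XY by (auto intro!: mult_nonneg_nonneg add_nonneg_nonneg)
    next
      case False
      then have "x i > 0" "y i > 0" using assms(2,3)[OF that] by auto
      then have "(x i / X) powr t * (y i / Y) powr (1 - t) \<le> t * (x i / X) + (1 - t) * (y i / Y)"
        using assms XY by (intro Youngs_inequality_0) auto
      moreover have "x i powr t * y i powr (1 - t)
                       = X powr t * Y powr (1 - t) * ((x i / X) powr t * (y i / Y) powr (1 - t))"
        using assms that XY by (simp add: powr_divide)
      ultimately show ?thesis using XY by (simp add: mult_left_mono)
    qed
    have "(\<Sum>i\<in>S. x i powr t * y i powr (1 - t))
            \<le> (\<Sum>i\<in>S. X powr t * Y powr (1 - t) * (t * (x i / X) + (1 - t) * (y i / Y)))"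
      using Young by (rule sum_mono)
    also have "\<dots> = X powr t * Y powr (1 - t) * (t * (X / X) + (1 - t) * (Y / Y))"
      by (simp add: X_def Y_def sum.distrib sum_divide_distrib[symmetric] flip: sum_distrib_left)
    finally show ?thesis using XY by (simp add: X_def Y_def)
  qed
qed

lemma sum_le_Holder_reciprocal:
  fixes w N :: "'a \<Rightarrow> real"
  assumes "finite S" "1 < P" "\<And>i. i \<in> S \<Longrightarrow> 0 \<le> w i" "\<And>i. i \<in> S \<Longrightarrow> 0 < N i"
  shows "(\<Sum>i\<in>S. w i)
           \<le> (\<Sum>i\<in>S. w i * N i powr (P - 1)) powr (1 / P) * (\<Sum>i\<in>S. w i / N i) powr (1 - 1 / P)"
proof -
  have "w i = (w i * N i powr (P - 1)) powr (1 / P) * (w i / N i) powr (1 - 1 / P)"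
    if "i \<in> S" for i
  proof -
    have "(P - 1) * (1 / P) = 1 - 1 / P" using assms(2) by (simp add: field_simps)
    then have "(w i * N i powr (P - 1)) powr (1 / P) * (w i / N i) powr (1 - 1 / P)
                 = (w i powr (1 / P) * w i powr (1 - 1 / P)) * (N i powr (1 - 1 / P) / N i powr (1 - 1 / P))"
      using assms(3,4)[OF that] by (simp add: powr_mult powr_divide powr_powr)
    also have "\<dots> = w i" using assms(3,4)[OF that] by (simp flip: powr_add)
    finally show ?thesis ..
  qed
  then have "(\<Sum>i\<in>S. w i)
               = (\<Sum>i\<in>S. (w i * N i powr (P - 1)) powr (1 / P) * (w i / N i) powr (1 - 1 / P))"
    by (rule sum.cong[OF refl])
  also have "\<dots> \<le> (\<Sum>i\<in>S. w i * N i powr (P - 1)) powr (1 / P) * (\<Sum>i\<in>S. w i / N i) powr (1 - 1 / P)"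
    using assms by (intro Holder_inequality_sum[where t = "1 / P", simplified])
      (auto intro: less_imp_le divide_nonneg_pos)
  finally show ?thesis .
qed

lemma sum_indicator_div_overlap_le:
  fixes B :: "'i \<Rightarrow> 'a set" and N :: "'i \<Rightarrow> nat"
  assumes "finite D" "\<And>d. d \<in> D \<Longrightarrow> card {d'\<in>D. B d' \<inter> B d \<noteq> {}} \<le> N d"
  shows "(\<Sum>d\<in>D. indicator (B d) x / real (N d)) \<le> (indicator (\<Union>d\<in>D. B d) x :: real)"
proof (cases "x \<in> (\<Union>d\<in>D. B d)")
  case False
  then show ?thesis by (simp add: indicator_def)
next
  case True
  define F where "F = {d\<in>D. x \<in> B d}"
  have "finite F" using assms(1) by (simp add: F_def)
  have "F \<noteq> {}" using True by (auto simp: F_def)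
  have "(\<Sum>d\<in>D. indicator (B d) x / real (N d)) = (\<Sum>d\<in>F. 1 / real (N d))"
    unfolding F_def using assms(1) by (intro sum.mono_neutral_cong_right) (auto simp: indicator_def)
  also have "\<dots> \<le> (\<Sum>d\<in>F. 1 / real (card F))"
  proof (rule sum_mono)
    fix d assume "d \<in> F"
    then have "F \<subseteq> {d'\<in>D. B d' \<inter> B d \<noteq> {}}" by (auto simp: F_def)
    then have "card F \<le> card {d'\<in>D. B d' \<inter> B d \<noteq> {}}"
      using assms(1) by (intro card_mono) simp_all
    also have "\<dots> \<le> N d" using \<open>d \<in> F\<close> assms(2) by (simp add: F_def)
    finally have "card F \<le> N d" .
    moreover have "card F > 0" using \<open>finite F\<close> \<open>F \<noteq> {}\<close> by (simp add: card_gt_0_iff)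
    ultimately show "1 / real (N d) \<le> 1 / real (card F)" by (intro divide_left_mono) auto
  qed
  also have "\<dots> = 1" using \<open>finite F\<close> \<open>F \<noteq> {}\<close> by simp
  finally show ?thesis using True by simp
qed

lemma sum_measure_div_overlap_le_measure_UN:
  fixes B :: "'i \<Rightarrow> 'a set" and N :: "'i \<Rightarrow> nat"
  assumes "finite D" "\<And>d. d \<in> D \<Longrightarrow> B d \<in> sets M" "\<And>d. d \<in> D \<Longrightarrow> emeasure M (B d) < \<infinity>"
    "\<And>d. d \<in> D \<Longrightarrow> card {d'\<in>D. B d' \<inter> B d \<noteq> {}} \<le> N d"
  shows "(\<Sum>d\<in>D. measure M (B d) / real (N d)) \<le> measure M (\<Union>d\<in>D. B d)"
proof -
  have UN: "(\<Union>d\<in>D. B d) \<in> sets M" using assms(1,2) by blast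
  have "emeasure M (\<Union>d\<in>D. B d) \<le> (\<Sum>d\<in>D. emeasure M (B d))"
    using assms(1,2) by (intro emeasure_subadditive_finite) blast+
  also have "\<dots> < \<infinity>" using assms(1,3) by simp
  finally have "emeasure M (\<Union>d\<in>D. B d) < \<infinity>" .
  then have int_UN: "integrable M (indicator (\<Union>d\<in>D. B d) :: _ \<Rightarrow> real)"
    using UN by (rule integrable_real_indicator[rotated])
  have int_B: "integrable M (\<lambda>x. indicator (B d) x / real (N d) :: real)" if "d \<in> D" for d
    using assms(2,3)[OF that] by (intro integrable_divide_zero integrable_real_indicator)
  have "(\<Sum>d\<in>D. measure M (B d) / real (N d)) = (\<Sum>d\<in>D. LINT x|M. indicator (B d) x / real (N d))"
    using assms(2) by (intro sum.cong) (auto simp: Int_absorb2 sets.sets_into_space)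
  also have "\<dots> = (LINT x|M. (\<Sum>d\<in>D. indicator (B d) x / real (N d)))"
    using int_B by (rule Bochner_Integration.integral_sum[symmetric])
  also have "\<dots> \<le> (LINT x|M. indicator (\<Union>d\<in>D. B d) x)"
    using int_B int_UN assms(1,4) by (intro integral_mono sum_indicator_div_overlap_le) auto
  also have "\<dots> = measure M (\<Union>d\<in>D. B d)"
    using UN by (simp add: Int_absorb2 sets.sets_into_space)
  finally show ?thesis .
qed

lemma box_in_sets:
  "box d \<in> sets (PiM {..<length d} (\<lambda>_. lborel))"
  unfolding box_def by (intro sets_PiM_I_finite) auto

lemma emeasure_box:
  assumes "0 \<notin> set d"
  shows "emeasure (PiM {..<length d} (\<lambda>_. lborel)) (box d) = ennreal (ln 2 ^ length d)"
proof -
  interpret product_sigma_finite "\<lambda>_. lborel :: real measure" by standard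
  have "emeasure lborel {ln (real (d ! i) / 2) ..< ln (real (d ! i))} = ennreal (ln 2)"
    if "i < length d" for i
  proof -
    have "d ! i > 0" using assms that by (metis gr0I nth_mem)
    then have "ln (real (d ! i)) - ln (real (d ! i) / 2) = ln 2" by (simp add: ln_div)
    moreover have "ln (real (d ! i) / 2) \<le> ln (real (d ! i))"
      using \<open>d ! i > 0\<close> by simp
    ultimately show ?thesis by (simp add: emeasure_lborel_Ico)
  qed
  then have "emeasure (PiM {..<length d} (\<lambda>_. lborel)) (box d) = (\<Prod>i<length d. ennreal (ln 2))"
    unfolding box_def by (subst emeasure_PiM) auto
  then show ?thesis by (simp add: prod_ennreal ennreal_power)
qed

lemma measure_box:
  assumes "0 \<notin> set d"
  shows "measure (PiM {..<length d} (\<lambda>_. lborel)) (box d) = ln 2 ^ length d"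
  using emeasure_box[OF assms] by (simp add: measure_def)

lemma box_overlap_ln_close:
  assumes "box d \<inter> box d' \<noteq> {}" "length d' = length d" "0 \<notin> set d" "0 \<notin> set d'" "i < length d"
  shows "\<bar>ln (real (d' ! i) / real (d ! i))\<bar> < ln 2"
proof -
  obtain x where "x \<in> box d" "x \<in> box d'" using assms(1) by blast
  then have "x i \<in> {ln (real (d ! i) / 2) ..< ln (real (d ! i))}"
            "x i \<in> {ln (real (d' ! i) / 2) ..< ln (real (d' ! i))}"
    using assms(2,5) by (auto simp: box_def PiE_iff)
  moreover have "d ! i > 0" "d' ! i > 0" using assms(2-5) by (metis gr0I nth_mem)+
  ultimately show ?thesis by (auto simp: ln_div)
qed

lemma div_tuples_length: "d \<in> div_tuples a \<Longrightarrow> length d = length a"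
  by (simp add: div_tuples_def pos_vecs_def)

lemma div_tuples_nonzero: "d \<in> div_tuples a \<Longrightarrow> 0 \<notin> set d"
  by (auto simp: div_tuples_def pos_vecs_def)

lemma div_tuples_le_prod_list:
  assumes "d \<in> div_tuples a" "x \<in> set d" "0 \<notin> set a"
  shows "x \<le> prod_list a"
proof -
  obtain i where i: "i < length d" "d ! i = x" using assms(2) by (auto simp: in_set_conv_nth)
  have "x dvd prod_list (take (Suc i) d)"
    using i by (intro prod_list_dvd) (auto simp: in_set_conv_nth nth_take intro!: exI[of _ i])
  also have "\<dots> dvd prod_list (take (Suc i) a)"
    using assms(1) i by (auto simp: div_tuples_def pos_vecs_def)
  also have "\<dots> dvd prod_list a"
    by (metis append_take_drop_id dvd_triv_left prod_list.append)
  finally have "x dvd prod_list a" .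
  moreover have "prod_list a > 0" using assms(3) by (metis gr0I prod_list_zero_iff)
  ultimately show ?thesis by (intro dvd_imp_le)
qed

lemma finite_div_tuples:
  assumes "0 \<notin> set a"
  shows "finite (div_tuples a)"
proof (rule finite_subset)
  show "div_tuples a \<subseteq> {d. set d \<subseteq> {..prod_list a} \<and> length d = length a}"
    using assms div_tuples_le_prod_list div_tuples_length by fastforce
qed (rule finite_lists_length_eq, simp)

definition near_div_tuples :: "nat list \<Rightarrow> nat list \<Rightarrow> nat list set" where
  "near_div_tuples a d =
     {d'\<in>div_tuples a. \<forall>i<length a. \<bar>ln (real (d' ! i) / real (d ! i))\<bar> < ln 2}"

lemma Wfun_eq_sum_card_near:
  "Wfun P a = (\<Sum>d\<in>div_tuples a. real (card (near_div_tuples a d)) powr (P - 1))"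
  by (simp add: Wfun_def near_div_tuples_def)

lemma card_near_div_tuples_pos:
  assumes "0 \<notin> set a" "d \<in> div_tuples a"
  shows "card (near_div_tuples a d) > 0"
proof -
  have "\<bar>ln (real (d ! i) / real (d ! i))\<bar> < ln 2" if "i < length a" for i
  proof -
    have "d ! i \<noteq> 0"
      using div_tuples_nonzero[OF assms(2)] div_tuples_length[OF assms(2)] that by (metis nth_mem)
    then show ?thesis by simp
  qed
  then have "d \<in> near_div_tuples a d" using assms(2) by (simp add: near_div_tuples_def)
  moreover have "finite (near_div_tuples a d)"
    using finite_div_tuples[OF assms(1)] by (simp add: near_div_tuples_def)
  ultimately show ?thesis by (auto simp: card_gt_0_iff)
qed

lemma sum_inverse_card_near_le_Lmeas:
  assumes "0 \<notin> set a"
  shows "(\<Sum>d\<in>div_tuples a. 1 / real (card (near_div_tuples a d))) \<le> Lmeas a / ln 2 ^ length a"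
proof -
  let ?M = "PiM {..<length a} (\<lambda>_. lborel :: real measure)"
  have "ln 2 ^ length a * (\<Sum>d\<in>div_tuples a. 1 / real (card (near_div_tuples a d)))
          = (\<Sum>d\<in>div_tuples a. measure ?M (box d) / real (card (near_div_tuples a d)))"
    using measure_box[OF div_tuples_nonzero] div_tuples_length
    by (force simp: sum_distrib_left intro!: sum.cong)
  also have "\<dots> \<le> measure ?M (\<Union>d\<in>div_tuples a. box d)"
  proof (rule sum_measure_div_overlap_le_measure_UN)
    fix d assume d: "d \<in> div_tuples a"
    show "box d \<in> sets ?M" using box_in_sets[of d] by (simp add: div_tuples_length[OF d])
    show "emeasure ?M (box d) < \<infinity>"
      using emeasure_box[OF div_tuples_nonzero[OF d]] by (simp add: div_tuples_length[OF d])
    have "{d'\<in>div_tuples a. box d' \<inter> box d \<noteq> {}} \<subseteq> near_div_tuples a d"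
      using d by (auto simp: near_div_tuples_def div_tuples_length div_tuples_nonzero
                        intro!: box_overlap_ln_close)
    then show "card {d'\<in>div_tuples a. box d' \<inter> box d \<noteq> {}} \<le> card (near_div_tuples a d)"
      using finite_div_tuples[OF assms] by (intro card_mono) (auto simp: near_div_tuples_def)
  qed (rule finite_div_tuples[OF assms])
  finally show ?thesis by (simp add: Lmeas_def pos_le_divide_eq mult.commute)
qed

theorem lemma6p1:
  fixes P :: real and k :: nat and A :: "nat list set"
  assumes "1 < P" and "finite A" and "A \<subseteq> pos_vecs k"
  shows "(\<Sum>a\<in>A. Wfun P a / real (prod_list a)) powr (1 / P)
         * ((1 / ln 2 ^ k) * (\<Sum>a\<in>A. Lmeas a / real (prod_list a))) powr (1 - 1 / P)
       \<ge> (\<Sum>a\<in>A. real (tau a) / real (prod_list a))"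
proof -
  let ?S = "Sigma A div_tuples"
  let ?w = "\<lambda>p. 1 / real (prod_list (fst p))"
  let ?N = "\<lambda>p. real (card (near_div_tuples (fst p) (snd p)))"
  have a: "0 \<notin> set a" "length a = k" if "a \<in> A" for a
    using assms(3) that by (auto simp: pos_vecs_def)
  have sum_S: "(\<Sum>p\<in>?S. f p) = (\<Sum>a\<in>A. \<Sum>d\<in>div_tuples a. f (a, d))" for f :: "_ \<Rightarrow> real"
    using sum.Sigma[OF assms(2), of div_tuples "\<lambda>a d. f (a, d)"] finite_div_tuples a by auto
  have W: "(\<Sum>p\<in>?S. ?w p * ?N p powr (P - 1)) = (\<Sum>a\<in>A. Wfun P a / real (prod_list a))"
    by (simp add: sum_S Wfun_eq_sum_card_near sum_divide_distrib)
  have L: "(\<Sum>p\<in>?S. ?w p / ?N p) \<le> (1 / ln 2 ^ k) * (\<Sum>a\<in>A. Lmeas a / real (prod_list a))"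
  proof -
    have "(\<Sum>d\<in>div_tuples a. 1 / real (prod_list a) / real (card (near_div_tuples a d)))
            \<le> Lmeas a / ln 2 ^ k / real (prod_list a)" if "a \<in> A" for a
      using divide_right_mono[OF sum_inverse_card_near_le_Lmeas[OF a(1)[OF that]], of "real (prod_list a)"]
      by (simp add: sum_divide_distrib mult.commute a(2)[OF that])
    then show ?thesis by (auto simp: sum_S sum_distrib_left intro!: sum_mono)
  qed
  have "(\<Sum>a\<in>A. real (tau a) / real (prod_list a)) = (\<Sum>p\<in>?S. ?w p)"
    by (simp add: sum_S tau_def)
  also have "\<dots> \<le> (\<Sum>p\<in>?S. ?w p * ?N p powr (P - 1)) powr (1 / P) * (\<Sum>p\<in>?S. ?w p / ?N p) powr (1 - 1 / P)"
    using assms(1,2) a finite_div_tuples card_near_div_tuples_pos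
    by (intro sum_le_Holder_reciprocal) auto
  also have "\<dots> \<le> (\<Sum>a\<in>A. Wfun P a / real (prod_list a)) powr (1 / P)
                   * ((1 / ln 2 ^ k) * (\<Sum>a\<in>A. Lmeas a / real (prod_list a))) powr (1 - 1 / P)"
    unfolding W using L assms(1) by (intro mult_left_mono powr_mono2 sum_nonneg) auto
  finally show ?thesis .
qed

end
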